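(* For all positive reals $a,b$, the function $s\mapsto \lambda_s(a,b)$ is monotone increasing on $\mathbb{R}$.
   Context: For $a,b>0$ with $a\neq b$ define $$\lambda_s(a,b)=\begin{cases}\dfrac{s-1}{s+1}\cdot\dfrac{a^{s+1}+b^{s+1}-2\left(\frac{a+b}{2}\right)^{s+1}}{a^s+b^s-2\left(\frac{a+b}{2}\right)^s}, & s\in\mathbb{R}\setminus\{-1,0,1\},\\[3mm] \dfrac{2\log\frac{a+b}{2}-\log a-\log b}{\frac{1}{2a}+\frac{1}{2b}-\frac{2}{a+b}}, & s=-1,\\[3mm] \dfrac{a\log a+b\log b-(a+b)\log\frac{a+b}{2}}{2\log\frac{a+b}{2}-\log a-\log b}, & s=0,\\[3mm] \dfrac{(b-a)^2}{4\left(a\log a+b\log b-(a+b)\log\frac{a+b}{2}\right)}, & s=1,\end{cases}$$ and $\lambda_s(a,a)=a$. (Equivalently $\lambda_s(a,b)=\bar f_{s+1}(a,b)/\bar f_s(a,b)$ where $\bar f(a,b)=f(a)+f(b)-2f(\frac{a+b}{2})$ and $f_s$ is the convex function with $f_s''(t)=t^{s-2}$ given by $f_s(t)=(t^s-st+s-1)/(s(s-1))$ for $s\ne0,1$, $f_0(t)=t-\log t-1$, $f_1(t)=t\log t-t+1$.) *)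

theory Defs
  imports Complex_Main
begin

definition lambda_mean :: "real \<Rightarrow> real \<Rightarrow> real \<Rightarrow> real" where
  "lambda_mean s a b =
    (if a = b then a
     else if s = -1 then
       (2 * ln ((a + b) / 2) - ln a - ln b) / (1 / (2 * a) + 1 / (2 * b) - 2 / (a + b))
     else if s = 0 then
       (a * ln a + b * ln b - (a + b) * ln ((a + b) / 2)) / (2 * ln ((a + b) / 2) - ln a - ln b)
     else if s = 1 then
       (b - a)^2 / (4 * (a * ln a + b * ln b - (a + b) * ln ((a + b) / 2)))
     else
       (s - 1) / (s + 1) *
       ((a powr (s + 1) + b powr (s + 1) - 2 * ((a + b) / 2) powr (s + 1)) /
        (a powr s + b powr s - 2 * ((a + b) / 2) powr s)))"

end

theory Submission
  imports Defs "HOL-Analysis.Analysis"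
begin

(* For the convex function f_s with f_s'' t = t^(s-2) put
   G_s(a,b) = f_s a + f_s b - 2 f_s ((a+b)/2), the midpoint Jensen gap.  Taylor's
   formula with integral remainder gives, for 0 < a < b,
     G_s(a,b) = integral over [a,b] of K(t) * t^(s-2),   K(t) = min (t-a) (b-t),
   so G_s(a,b) is a moment of the nonnegative weight K; in particular G_s(a,b) > 0.
   The closed forms of G_s show lambda_s(a,b) = G_(s+1)(a,b) / G_s(a,b).
   Monotonicity in s then follows from a Chebyshev-type inequality for moments:
   if M x = integral of w(t) t^x with w >= 0 on [a,b], a > 0, and all M x > 0,
   then M(x+1)/M(x) is increasing in x.  (Integrate w t^s (t - mu)(t^d - mu^d) >= 0
   with mu = M(s+1)/M(s), d = r - s.)  The file develops: the kernel formula for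
   Jensen gaps, the family f_s and its gaps, positivity, the ratio representation
   of lambda_s, the moment-ratio inequality, and finally the theorem, with the
   case b < a reduced to a < b by symmetry. *)

section \<open>Midpoint Jensen gaps as kernel integrals\<close>

text \<open>The tent-shaped Peano kernel of the midpoint gap on [a,b].\<close>
definition midpoint_kernel :: "real \<Rightarrow> real \<Rightarrow> real \<Rightarrow> real" where
  "midpoint_kernel a b t = min (t - a) (b - t)"

lemma midpoint_kernel_nonneg: "t \<in> {a..b} \<Longrightarrow> midpoint_kernel a b t \<ge> 0"
  by (auto simp: midpoint_kernel_def)

definition midpoint_gap :: "(real \<Rightarrow> real) \<Rightarrow> real \<Rightarrow> real \<Rightarrow> real" where
  "midpoint_gap f a b = f a + f b - 2 * f ((a + b) / 2)"

lemma has_integral_real_derivative: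
  fixes g g' :: "real \<Rightarrow> real"
  assumes "c \<le> d" "\<And>t. t \<in> {c..d} \<Longrightarrow> (g has_real_derivative g' t) (at t)"
  shows "(g' has_integral (g d - g c)) {c..d}"
  using assms by (intro fundamental_theorem_of_calculus)
    (simp_all add: has_real_derivative_iff_has_vector_derivative has_vector_derivative_at_within)

lemma midpoint_gap_kernel_integral:
  fixes f f' f'' :: "real \<Rightarrow> real"
  assumes ab: "a < b"
    and d1: "\<And>t. t \<in> {a..b} \<Longrightarrow> (f has_real_derivative f' t) (at t)"
    and d2: "\<And>t. t \<in> {a..b} \<Longrightarrow> (f' has_real_derivative f'' t) (at t)"
  shows "((\<lambda>t. midpoint_kernel a b t * f'' t) has_integral midpoint_gap f a b) {a..b}"
proof -
  define m where "m = (a + b) / 2"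
  have am: "a \<le> m" "m \<le> b" using ab by (auto simp: m_def)
  text \<open>On each half the kernel is linear; integrate by parts via explicit primitives.\<close>
  have left: "((\<lambda>t. (t - a) * f'' t) has_integral
      (((m - a) * f' m - f m) - ((a - a) * f' a - f a))) {a..m}"
  proof (rule has_integral_real_derivative[OF am(1)])
    fix t assume "t \<in> {a..m}"
    then have "t \<in> {a..b}" using am by auto
    then show "((\<lambda>t. (t - a) * f' t - f t) has_real_derivative (t - a) * f'' t) (at t)"
      using d1 d2 by (auto intro!: derivative_eq_intros)
  qed
  have right: "((\<lambda>t. (b - t) * f'' t) has_integral
      (((b - b) * f' b + f b) - ((b - m) * f' m + f m))) {m..b}"
  proof (rule has_integral_real_derivative[OF am(2)])
    fix t assume "t \<in> {m..b}"
    then have "t \<in> {a..b}" using am by auto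
    then show "((\<lambda>t. (b - t) * f' t + f t) has_real_derivative (b - t) * f'' t) (at t)"
      using d1 d2 by (auto intro!: derivative_eq_intros)
  qed
  have "((\<lambda>t. midpoint_kernel a b t * f'' t) has_integral
      (((m - a) * f' m - f m) - ((a - a) * f' a - f a))
      + (((b - b) * f' b + f b) - ((b - m) * f' m + f m))) {a..b}"
  proof (rule has_integral_combine[OF am])
    show "((\<lambda>t. midpoint_kernel a b t * f'' t) has_integral
        (((m - a) * f' m - f m) - ((a - a) * f' a - f a))) {a..m}"
      by (rule has_integral_eq[OF _ left]) (auto simp: midpoint_kernel_def m_def)
    show "((\<lambda>t. midpoint_kernel a b t * f'' t) has_integral
        (((b - b) * f' b + f b) - ((b - m) * f' m + f m))) {m..b}"
      by (rule has_integral_eq[OF _ right]) (auto simp: midpoint_kernel_def m_def)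
  qed
  text \<open>The boundary terms in f' m cancel because m - a = b - m.\<close>
  moreover have "b - m = m - a" by (simp add: m_def field_simps)
  then have "(((m - a) * f' m - f m) - ((a - a) * f' a - f a))
      + (((b - b) * f' b + f b) - ((b - m) * f' m + f m)) = midpoint_gap f a b"
    by (simp add: midpoint_gap_def m_def[symmetric])
  ultimately show ?thesis by simp
qed

section \<open>The convex family f_s and its gaps\<close>

text \<open>The normalised convex function f_s with f_s 1 = f_s' 1 = 0 and f_s'' t = t^(s-2).\<close>
definition convex_power :: "real \<Rightarrow> real \<Rightarrow> real" where
  "convex_power s t =
    (if s = 0 then t - ln t - 1
     else if s = 1 then t * ln t - t + 1
     else (t powr s - s * t + s - 1) / (s * (s - 1)))"

definition convex_power_deriv :: "real \<Rightarrow> real \<Rightarrow> real" where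
  "convex_power_deriv s t =
    (if s = 0 then 1 - 1 / t
     else if s = 1 then ln t
     else (t powr (s - 1) - 1) / (s - 1))"

lemma convex_power_has_derivatives:
  assumes t: "t > 0"
  shows "(convex_power s has_real_derivative convex_power_deriv s t) (at t)"
    and "(convex_power_deriv s has_real_derivative t powr (s - 2)) (at t)"
proof -
  consider "s = 0" | "s = 1" | "s \<noteq> 0" "s \<noteq> 1" by blast
  then have "(convex_power s has_real_derivative convex_power_deriv s t) (at t) \<and>
             (convex_power_deriv s has_real_derivative t powr (s - 2)) (at t)"
  proof cases
    case 1
    have "convex_power s = (\<lambda>t. t - ln t - 1)" "convex_power_deriv s = (\<lambda>t. 1 - 1 / t)"
      using 1 by (auto simp: convex_power_def convex_power_deriv_def)
    then show ?thesis
      using t 1 by (auto intro!: derivative_eq_intros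
          simp: convex_power_deriv_def field_simps powr_minus_divide powr_realpow power2_eq_square)
  next
    case 2
    have "convex_power s = (\<lambda>t. t * ln t - t + 1)" "convex_power_deriv s = ln"
      using 2 by (auto simp: convex_power_def convex_power_deriv_def)
    then show ?thesis
      using t 2 by (auto intro!: derivative_eq_intros
          simp: convex_power_deriv_def field_simps powr_minus_divide)
  next
    case 3
    have fs: "convex_power s = (\<lambda>t. (t powr s - s * t + s - 1) / (s * (s - 1)))"
      and ds: "convex_power_deriv s = (\<lambda>t. (t powr (s - 1) - 1) / (s - 1))"
      using 3 by (auto simp: convex_power_def convex_power_deriv_def)
    have "s * t powr (s - 1) - s = s * (t powr (s - 1) - 1)"
      by (simp add: algebra_simps)
    then have "(s * t powr (s - 1) - s) / (s * (s - 1)) = convex_power_deriv s t"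
      using 3 by (simp add: ds)
    moreover have "(convex_power s has_real_derivative (s * t powr (s - 1) - s) / (s * (s - 1))) (at t)"
      unfolding fs using t 3 by (auto intro!: derivative_eq_intros)
    moreover have "(convex_power_deriv s has_real_derivative t powr (s - 2)) (at t)"
    proof -
      have "s - 1 - 1 = s - 2" by simp
      then show ?thesis unfolding ds using t 3 by (auto intro!: derivative_eq_intros)
    qed
    ultimately show ?thesis by simp
  qed
  then show "(convex_power s has_real_derivative convex_power_deriv s t) (at t)"
    and "(convex_power_deriv s has_real_derivative t powr (s - 2)) (at t)" by blast+
qed

lemma convex_power_gap_integral:
  assumes "0 < a" "a < b"
  shows "((\<lambda>t. midpoint_kernel a b t * t powr (s - 2)) has_integral
           midpoint_gap (convex_power s) a b) {a..b}"
  using assms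
  by (intro midpoint_gap_kernel_integral[where f' = "convex_power_deriv s"])
     (auto intro: convex_power_has_derivatives)

text \<open>Closed forms of G_s: the affine parts of f_s cancel in the gap.\<close>
lemma convex_power_gap_closed_form:
  "midpoint_gap (convex_power s) a b =
    (if s = 0 then 2 * ln ((a + b) / 2) - ln a - ln b
     else if s = 1 then a * ln a + b * ln b - (a + b) * ln ((a + b) / 2)
     else (a powr s + b powr s - 2 * ((a + b) / 2) powr s) / (s * (s - 1)))"
proof -
  have combine: "x / c + y / c - 2 * (z / c) = (x + y - 2 * z) / c" for x y z c :: real
    by (simp add: diff_divide_distrib add_divide_distrib)
  have affine_cancel: "(a powr s - s * a + s - 1) + (b powr s - s * b + s - 1)
      - 2 * (((a + b) / 2) powr s - s * ((a + b) / 2) + s - 1)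
      = a powr s + b powr s - 2 * ((a + b) / 2) powr s"
    by (simp add: algebra_simps)
  consider "s = 0" | "s = 1" | "s \<noteq> 0" "s \<noteq> 1" by blast
  then show ?thesis
  proof cases
    case 3
    then show ?thesis
      by (simp only: midpoint_gap_def convex_power_def if_False combine affine_cancel)
  qed (simp_all add: midpoint_gap_def convex_power_def field_simps)
qed

lemma convex_power_gap_2:
  assumes "0 < a" "0 < b"
  shows "midpoint_gap (convex_power 2) a b = (b - a)^2 / 4"
  using assms by (simp add: convex_power_gap_closed_form powr_realpow power2_eq_square field_simps)

text \<open>Positivity: t^(s-2) is bounded below on [a,b] by a positive constant c,
  so G_s >= c * G_2 = c (b-a)^2/4 > 0.\<close>
lemma convex_power_gap_pos:
  assumes "0 < a" "a < b"
  shows "midpoint_gap (convex_power s) a b > 0"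
proof -
  define c where "c = min (a powr (s - 2)) (b powr (s - 2))"
  have c_pos: "c > 0" using assms by (simp add: c_def)
  have "((\<lambda>t. midpoint_kernel a b t * t powr (2 - 2)) has_integral (b - a)^2 / 4) {a..b}"
    using convex_power_gap_integral[OF assms, of 2] convex_power_gap_2[of a b] assms by simp
  then have kernel_int: "(midpoint_kernel a b has_integral (b - a)^2 / 4) {a..b}"
    by (rule has_integral_eq[rotated]) (use assms in auto)
  have c_below: "c * midpoint_kernel a b t \<le> midpoint_kernel a b t * t powr (s - 2)"
    if t: "t \<in> {a..b}" for t
  proof -
    have "c \<le> t powr (s - 2)"
    proof (cases "s - 2 \<ge> 0")
      case True
      then show ?thesis using t assms by (auto simp: c_def intro!: min.coboundedI1 powr_mono2)
    next
      case False
      then show ?thesis using t assms by (auto simp: c_def intro!: min.coboundedI2 powr_mono2')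
    qed
    then show ?thesis using midpoint_kernel_nonneg[OF t] by (metis mult.commute mult_right_mono)
  qed
  have "c * ((b - a)^2 / 4) \<le> midpoint_gap (convex_power s) a b"
    by (rule has_integral_le[OF has_integral_mult_right[OF kernel_int]
          convex_power_gap_integral[OF assms] c_below])
  moreover have "c * ((b - a)^2 / 4) > 0" using c_pos assms by simp
  ultimately show ?thesis by linarith
qed

section \<open>lambda_s as a ratio of consecutive gaps\<close>

lemma lambda_mean_gap_ratio:
  assumes "0 < a" "a < b"
  shows "lambda_mean s a b =
           midpoint_gap (convex_power (s + 1)) a b / midpoint_gap (convex_power s) a b"
proof -
  have ne: "a \<noteq> b" using assms by simp
  consider "s = -1" | "s = 0" | "s = 1" | "s \<noteq> -1" "s \<noteq> 0" "s \<noteq> 1" by blast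
  then show ?thesis
  proof cases
    case 1
    then show ?thesis using assms
      by (simp add: lambda_mean_def convex_power_gap_closed_form powr_neg_one field_simps)
  next
    case 2
    then show ?thesis using ne by (simp add: lambda_mean_def convex_power_gap_closed_form)
  next
    case 3
    then show ?thesis using ne assms
      by (simp add: lambda_mean_def convex_power_gap_2 divide_divide_eq_left
          convex_power_gap_closed_form[of 1])
  next
    case 4
    define x where "x = a powr (s + 1) + b powr (s + 1) - 2 * ((a + b) / 2) powr (s + 1)"
    define y where "y = a powr s + b powr s - 2 * ((a + b) / 2) powr s"
    have "lambda_mean s a b = (s - 1) / (s + 1) * (x / y)"
      using 4 ne by (simp add: lambda_mean_def x_def y_def)
    also have "\<dots> = (s * ((s - 1) * x)) / (s * ((s + 1) * y))"
      using 4 by simp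
    also have "\<dots> = (x / ((s + 1) * s)) / (y / (s * (s - 1)))"
      by (simp add: ac_simps)
    also have "\<dots> = midpoint_gap (convex_power (s + 1)) a b / midpoint_gap (convex_power s) a b"
      using 4 by (simp add: convex_power_gap_closed_form x_def y_def)
    finally show ?thesis .
  qed
qed

text \<open>The mean is symmetric in a and b, so a < b may be assumed.\<close>
lemma lambda_mean_sym: "lambda_mean s a b = lambda_mean s b a"
  by (simp add: lambda_mean_def add.commute power2_commute)

section \<open>Monotonicity of moment ratios\<close>

lemma moment_ratio_mono:
  fixes w M :: "real \<Rightarrow> real"
  assumes a: "0 < a"
    and w_nonneg: "\<And>t. t \<in> {a..b} \<Longrightarrow> w t \<ge> 0"
    and moment: "\<And>x. ((\<lambda>t. w t * t powr x) has_integral M x) {a..b}"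
    and M_pos: "\<And>x. M x > 0"
    and sr: "s \<le> r"
  shows "M (s + 1) / M s \<le> M (r + 1) / M r"
proof -
  define d where "d = r - s"
  define \<mu> where "\<mu> = M (s + 1) / M s"
  have d: "d \<ge> 0" using sr by (simp add: d_def)
  have \<mu>: "\<mu> > 0" using M_pos by (simp add: \<mu>_def)
  text \<open>The combination below is the integral of w t^s (t - mu)(t^d - mu^d) >= 0.\<close>
  have comb: "((\<lambda>t. w t * t powr (r + 1) - \<mu> * (w t * t powr r)
        - \<mu> powr d * (w t * t powr (s + 1)) + \<mu> powr (d + 1) * (w t * t powr s)) has_integral
      (M (r + 1) - \<mu> * M r - \<mu> powr d * M (s + 1) + \<mu> powr (d + 1) * M s)) {a..b}"
    by (intro has_integral_add has_integral_diff has_integral_mult_right moment)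
  have factor: "w t * t powr (r + 1) - \<mu> * (w t * t powr r)
        - \<mu> powr d * (w t * t powr (s + 1)) + \<mu> powr (d + 1) * (w t * t powr s)
      = w t * t powr s * ((t - \<mu>) * (t powr d - \<mu> powr d))" if "t > 0" for t
  proof -
    have "r + 1 = s + d + 1" "r = s + d" by (simp_all add: d_def)
    then show ?thesis using that \<mu> by (simp add: powr_add algebra_simps)
  qed
  have integrand_nonneg: "0 \<le> w t * t powr s * ((t - \<mu>) * (t powr d - \<mu> powr d))"
    if t: "t \<in> {a..b}" for t
  proof -
    have tp: "t > 0" using t a by auto
    have "(t - \<mu>) * (t powr d - \<mu> powr d) \<ge> 0"
    proof (cases "t \<le> \<mu>")
      case True
      then have "t powr d \<le> \<mu> powr d" using tp d by (intro powr_mono2) auto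
      then show ?thesis using True by (simp add: mult_nonpos_nonpos)
    next
      case False
      then have "\<mu> powr d \<le> t powr d" using \<mu> d by (intro powr_mono2) auto
      then show ?thesis using False by simp
    qed
    then show ?thesis using w_nonneg[OF t] by simp
  qed
  have "0 \<le> M (r + 1) - \<mu> * M r - \<mu> powr d * M (s + 1) + \<mu> powr (d + 1) * M s"
    using a by (intro has_integral_nonneg[OF has_integral_eq[OF _ comb]])
      (auto simp: factor integrand_nonneg)
  moreover have "\<mu> powr d * M (s + 1) = \<mu> powr (d + 1) * M s"
  proof -
    have "M (s + 1) = \<mu> * M s" using M_pos[of s] by (simp add: \<mu>_def)
    then show ?thesis using \<mu> by (simp add: powr_add)
  qed
  ultimately have "\<mu> * M r \<le> M (r + 1)" by linarith
  then show ?thesis using M_pos[of r] by (simp add: \<mu>_def pos_le_divide_eq)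
qed

lemma lambda_mean_mono_ordered:
  assumes "0 < a" "a < b" "s \<le> r"
  shows "lambda_mean s a b \<le> lambda_mean r a b"
proof -
  define M where "M x = midpoint_gap (convex_power (x + 2)) a b" for x
  have "M (s - 2 + 1) / M (s - 2) \<le> M (r - 2 + 1) / M (r - 2)"
  proof (rule moment_ratio_mono[where w = "midpoint_kernel a b"])
    show "((\<lambda>t. midpoint_kernel a b t * t powr x) has_integral M x) {a..b}" for x
      using convex_power_gap_integral[OF assms(1,2), of "x + 2"] by (simp add: M_def)
    show "M x > 0" for x
      unfolding M_def by (rule convex_power_gap_pos[OF assms(1,2)])
  qed (use assms midpoint_kernel_nonneg in auto)
  moreover have "M (x - 2 + 1) = midpoint_gap (convex_power (x + 1)) a b"
    and "M (x - 2) = midpoint_gap (convex_power x) a b" for x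
    unfolding M_def by (simp_all add: add.commute)
  ultimately show ?thesis
    by (simp add: lambda_mean_gap_ratio[OF assms(1,2)])
qed

theorem theorem3:
  fixes a b :: real
  assumes "a > 0" and "b > 0"
  shows "mono (\<lambda>s. lambda_mean s a b)"
proof (rule monoI)
  fix s r :: real assume sr: "s \<le> r"
  consider "a = b" | "a < b" | "b < a" by linarith
  then show "lambda_mean s a b \<le> lambda_mean r a b"
  proof cases
    case 1
    then show ?thesis by (simp add: lambda_mean_def)
  next
    case 2
    then show ?thesis by (rule lambda_mean_mono_ordered[OF assms(1) _ sr])
  next
    case 3
    then show ?thesis
      using lambda_mean_mono_ordered[OF assms(2) 3 sr] by (simp add: lambda_mean_sym[of _ a b])
  qed
qed

end
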